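(* For every integer $k \geq 2$ and every $0 < \gamma \leq 1/100$ there exists $n_0$ such that for every $n \geq n_0$ the following holds. Let $H$ be an $n$-vertex $k$-graph with $\delta_{k-1}(H) \geq n/3$, and let $G$ be the $\gamma$-diamond graph of $H$. Then $\delta(G) \geq n/10$.
   Context: $\delta_{k-1}(H)$ is the minimum over $(k-1)$-subsets $S \subseteq V(H)$ of the number of edges containing $S$. For $x, y \in V(H)$, an $(x,y)$-diamond is a pair of edges $e, f$ of $H$ with $|e \cap f| = k-1$, $x \in e\setminus f$, $y \in f \setminus e$. The $\gamma$-diamond graph of an $n$-vertex $k$-graph $H$ is the graph $G$ on $V(H)$ in which $xy \in E(G)$ if and only if $H$ contains at least $\gamma\binom{n}{k-1}$ distinct $(x,y)$-diamonds. $\delta(G)$ is the minimum degree of $G$. *)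

theory Defs
  imports Complex_Main
begin

definition kgraph :: "nat \<Rightarrow> nat \<Rightarrow> nat set set \<Rightarrow> bool" where
  "kgraph n k H \<longleftrightarrow> (\<forall>e\<in>H. e \<subseteq> {..<n} \<and> card e = k)"

definition min_codegree :: "nat \<Rightarrow> nat \<Rightarrow> nat set set \<Rightarrow> nat" where
  "min_codegree n k H = Min {card {e\<in>H. S \<subseteq> e} | S. S \<subseteq> {..<n} \<and> card S = k - 1}"

definition diamonds :: "nat \<Rightarrow> nat set set \<Rightarrow> nat \<Rightarrow> nat \<Rightarrow> (nat set \<times> nat set) set" where
  "diamonds k H x y = {(e, f). e \<in> H \<and> f \<in> H \<and> card (e \<inter> f) = k - 1 \<and> x \<in> e - f \<and> y \<in> f - e}"

definition diamond_adj :: "nat \<Rightarrow> nat \<Rightarrow> real \<Rightarrow> nat set set \<Rightarrow> nat \<Rightarrow> nat \<Rightarrow> bool" where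
  "diamond_adj n k \<gamma> H x y \<longleftrightarrow> x \<in> {..<n} \<and> y \<in> {..<n} \<and> x \<noteq> y \<and>
     real (card (diamonds k H x y)) \<ge> \<gamma> * real (n choose (k - 1))"

definition diamond_min_degree :: "nat \<Rightarrow> nat \<Rightarrow> real \<Rightarrow> nat set set \<Rightarrow> nat" where
  "diamond_min_degree n k \<gamma> H = Min ((\<lambda>x. card {y \<in> {..<n}. diamond_adj n k \<gamma> H x y}) ` {..<n})"

end

theory Submission imports Defs begin

(*
  Fix a vertex x and let L be its link, the (k-1)-sets S with S + x an edge. With d the minimum
  codegree, every S in L lies in the links of at least d - 1 vertices y other than x, so
  sum_y |L \<inter> L_y| >= (d - 1) |L|. Each S in L \<inter> L_y gives the (x,y)-diamond (S + x, S + y), so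
  |L \<inter> L_y| < gamma C(n,k-1) unless xy is an edge of the diamond graph, and |L \<inter> L_y| <= |L|
  always. Hence (d - 1 - deg x) |L| <= gamma n C(n,k-1). Double counting gives
  (k-1) |L| >= C(n-1,k-2) d, and as (k-1) C(n,k-1) = n C(n-1,k-2) we get d (d - 1 - deg x) <= gamma n^2.
  With d >= n/3 and gamma <= 1/100 this forces deg x >= n/10 once n >= 10.
*)

lemma sum_card_filter_swap:
  assumes "finite A" "finite B"
  shows "(\<Sum>a\<in>A. card {b\<in>B. P a b}) = (\<Sum>b\<in>B. card {a\<in>A. P a b})"
proof -
  have "(\<Sum>a\<in>A. card {b\<in>B. P a b}) = card (SIGMA a:A. {b\<in>B. P a b})"
    using assms by simp
  also have "\<dots> = card (prod.swap ` (SIGMA b:B. {a\<in>A. P a b}))"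
    by (intro arg_cong[where f = card]) (auto simp: image_iff)
  also have "\<dots> = card (SIGMA b:B. {a\<in>A. P a b})"
    by (intro card_image) (simp add: inj_on_def)
  also have "\<dots> = (\<Sum>b\<in>B. card {a\<in>A. P a b})"
    using assms by simp
  finally show ?thesis .
qed

(* Both sides count the pairs (S, u) with u \<in> S \<in> F, matched via (S, u) \<mapsto> (S - {u}, u). *)
lemma card_mult_eq_sum_card_extensions:
  assumes "finite U" "0 < m" "F \<subseteq> {S. S \<subseteq> U \<and> card S = m}"
  shows "m * card F = (\<Sum>T | T \<subseteq> U \<and> card T = m - 1. card {u \<in> U - T. insert u T \<in> F})"
proof -
  let ?B = "{T. T \<subseteq> U \<and> card T = m - 1}"
  have fin_F: "finite F" and fin_B: "finite ?B"
    using assms by (auto intro: finite_subset[of _ "Pow U"])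
  have fin_members: "finite S" if "S \<in> F" for S
    using that assms by (auto intro: finite_subset)
  have "m * card F = (\<Sum>S\<in>F. card S)"
    using assms(3) by (simp add: sum.cong[of F F card "\<lambda>_. m"] subset_eq)
  also have "\<dots> = card (SIGMA S:F. S)"
    using fin_F fin_members by simp
  also have "\<dots> = card (SIGMA T:?B. {u \<in> U - T. insert u T \<in> F})"
  proof (rule bij_betw_same_card[of "\<lambda>(S, u). (S - {u}, u)"],
         rule bij_betw_byWitness[where f' = "\<lambda>(T, u). (insert u T, u)"])
    show "\<forall>p \<in> (SIGMA S:F. S). (\<lambda>(T, u). (insert u T, u)) ((\<lambda>(S, u). (S - {u}, u)) p) = p"
      by (auto simp: insert_absorb)
    show "\<forall>p \<in> (SIGMA T:?B. {u \<in> U - T. insert u T \<in> F}).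
            (\<lambda>(S, u). (S - {u}, u)) ((\<lambda>(T, u). (insert u T, u)) p) = p"
      by auto
    show "(\<lambda>(S, u). (S - {u}, u)) ` (SIGMA S:F. S) \<subseteq> (SIGMA T:?B. {u \<in> U - T. insert u T \<in> F})"
      using assms(3) fin_members by (auto simp: insert_absorb)
    show "(\<lambda>(T, u). (insert u T, u)) ` (SIGMA T:?B. {u \<in> U - T. insert u T \<in> F}) \<subseteq> (SIGMA S:F. S)"
      by auto
  qed
  also have "\<dots> = (\<Sum>T\<in>?B. card {u \<in> U - T. insert u T \<in> F})"
    using fin_B assms(1) by simp
  finally show ?thesis .
qed

definition link :: "nat set set \<Rightarrow> nat \<Rightarrow> nat set set" where
  "link H x = {S. x \<notin> S \<and> insert x S \<in> H}"

lemma kgraph_finite: "kgraph n k H \<Longrightarrow> finite H"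
  unfolding kgraph_def by (auto intro: finite_subset[of _ "Pow {..<n}"])

lemma link_subset:
  assumes "kgraph n k H"
  shows "link H x \<subseteq> {S. S \<subseteq> {..<n} - {x} \<and> card S = k - 1}"
proof
  fix S assume "S \<in> link H x"
  then have "x \<notin> S" "insert x S \<subseteq> {..<n}" "card (insert x S) = k"
    using assms by (auto simp: link_def kgraph_def)
  moreover have "finite S"
    using \<open>insert x S \<subseteq> {..<n}\<close> by (auto intro: finite_subset)
  ultimately show "S \<in> {S. S \<subseteq> {..<n} - {x} \<and> card S = k - 1}"
    by auto
qed

lemma finite_link: "kgraph n k H \<Longrightarrow> finite (link H x)"
  by (rule finite_subset[OF link_subset]) (auto intro: finite_subset[of _ "Pow {..<n}"])

lemma card_edges_superset_eq_card_link:
  assumes "kgraph n k H" "0 < k" "K \<subseteq> {..<n}" "card K = k - 1"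
  shows "card {e \<in> H. K \<subseteq> e} = card {v \<in> {..<n}. K \<in> link H v}"
proof -
  have "{e \<in> H. K \<subseteq> e} = (\<lambda>v. insert v K) ` {v \<in> {..<n}. K \<in> link H v}"
  proof (intro equalityI subsetI)
    fix e assume e: "e \<in> {e \<in> H. K \<subseteq> e}"
    then have "e \<subseteq> {..<n}" "card e = k" "K \<subseteq> e"
      using assms(1) by (auto simp: kgraph_def)
    then have "card (e - K) = 1"
      using assms(2,4) by (simp add: card_Diff_subset finite_subset)
    then obtain v where v: "e - K = {v}"
      by (auto simp: card_Suc_eq)
    then have "e = insert v K" "v \<notin> K" "v < n"
      using e \<open>e \<subseteq> {..<n}\<close> by auto
    then show "e \<in> (\<lambda>v. insert v K) ` {v \<in> {..<n}. K \<in> link H v}"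
      using e by (auto simp: link_def)
  qed (auto simp: link_def)
  moreover have "inj_on (\<lambda>v. insert v K) {v \<in> {..<n}. K \<in> link H v}"
    by (auto simp: inj_on_def link_def insert_ident)
  ultimately show ?thesis
    by (simp add: card_image)
qed

lemma min_codegree_le:
  assumes "K \<subseteq> {..<n}" "card K = k - 1"
  shows "min_codegree n k H \<le> card {e \<in> H. K \<subseteq> e}"
  unfolding min_codegree_def using assms
  by (intro Min_le) (auto simp: setcompr_eq_image intro: finite_subset[of _ "Pow {..<n}"])

lemma diamond_min_degree_attained:
  assumes "0 < n"
  shows "\<exists>x<n. diamond_min_degree n k \<gamma> H = card {y \<in> {..<n}. diamond_adj n k \<gamma> H x y}"
proof -
  have "diamond_min_degree n k \<gamma> H \<in> (\<lambda>x. card {y \<in> {..<n}. diamond_adj n k \<gamma> H x y}) ` {..<n}"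
    unfolding diamond_min_degree_def using assms by (intro Min_in) auto
  then show ?thesis
    by auto
qed

lemma card_link_inter_le_card_diamonds:
  assumes "kgraph n k H" "x \<noteq> y"
  shows "card (link H x \<inter> link H y) \<le> card (diamonds k H x y)"
proof (rule card_inj_on_le)
  show "inj_on (\<lambda>S. (insert x S, insert y S)) (link H x \<inter> link H y)"
    by (auto simp: inj_on_def link_def insert_ident)
  show "(\<lambda>S. (insert x S, insert y S)) ` (link H x \<inter> link H y) \<subseteq> diamonds k H x y"
  proof clarify
    fix S assume S: "S \<in> link H x" "S \<in> link H y"
    then have "card S = k - 1"
      using link_subset[OF assms(1)] by blast
    moreover have "insert x S \<inter> insert y S = S"
      using S assms(2) by (auto simp: link_def)
    ultimately show "(insert x S, insert y S) \<in> diamonds k H x y"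
      using S assms(2) by (auto simp: diamonds_def link_def)
  qed
  show "finite (diamonds k H x y)"
    using kgraph_finite[OF assms(1)]
    by (auto simp: diamonds_def intro: finite_subset[of _ "H \<times> H"])
qed

lemma min_codegree_le_card_link:
  assumes "kgraph n k H" "2 \<le> k" "x < n"
  shows "(n - 1 choose (k - 2)) * min_codegree n k H \<le> (k - 1) * card (link H x)"
proof -
  define U where "U = {..<n} - {x}"
  let ?B = "{T. T \<subseteq> U \<and> card T = k - 2}"
  have U: "finite U" "card U = n - 1"
    using assms(3) by (auto simp: U_def)
  have codeg: "min_codegree n k H \<le> card {u \<in> U - T. insert u T \<in> link H x}" if "T \<in> ?B" for T
  proof -
    have "finite T" "x \<notin> T"
      using that U(1) by (auto simp: U_def intro: finite_subset)
    then have T: "insert x T \<subseteq> {..<n}" "card (insert x T) = k - 1"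
      using that assms(2,3) by (auto simp: U_def)
    have "{u \<in> U - T. insert u T \<in> link H x} = {v \<in> {..<n}. insert x T \<in> link H v}"
      using that by (auto simp: U_def link_def insert_commute)
    then show ?thesis
      using min_codegree_le[OF T(1,2), of H] card_edges_superset_eq_card_link[OF assms(1) _ T(1,2)] assms(2)
      by simp
  qed
  have "(n - 1 choose (k - 2)) * min_codegree n k H = (\<Sum>T\<in>?B. min_codegree n k H)"
    using n_subsets[OF U(1), of "k - 2"] U(2) by simp
  also have "\<dots> \<le> (\<Sum>T\<in>?B. card {u \<in> U - T. insert u T \<in> link H x})"
    using codeg by (rule sum_mono)
  also have "\<dots> = (k - 1) * card (link H x)"
    using card_mult_eq_sum_card_extensions[OF U(1) _ link_subset[OF assms(1), of x, folded U_def]] assms(2)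
    by (simp add: diff_diff_add numeral_2_eq_2)
  finally show ?thesis .
qed

lemma sum_card_link_inter_ge:
  assumes "kgraph n k H" "0 < k" "x < n"
  shows "(real (min_codegree n k H) - 1) * card (link H x)
           \<le> (\<Sum>y \<in> {..<n} - {x}. real (card (link H x \<inter> link H y)))"
proof -
  have codeg: "real (min_codegree n k H) - 1 \<le> card {y \<in> {..<n} - {x}. S \<in> link H y}"
    if S: "S \<in> link H x" for S
  proof -
    have S': "S \<subseteq> {..<n}" "card S = k - 1"
      using S link_subset[OF assms(1)] by auto
    have "{v \<in> {..<n}. S \<in> link H v} = insert x {y \<in> {..<n} - {x}. S \<in> link H y}"
      using S assms(3) by auto
    then have "card {v \<in> {..<n}. S \<in> link H v} = card {y \<in> {..<n} - {x}. S \<in> link H y} + 1"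
      by simp
    then show ?thesis
      using min_codegree_le[OF S', of H] card_edges_superset_eq_card_link[OF assms(1,2) S'] by linarith
  qed
  have "(real (min_codegree n k H) - 1) * card (link H x)
          \<le> (\<Sum>S \<in> link H x. real (card {y \<in> {..<n} - {x}. S \<in> link H y}))"
    using sum_mono[OF codeg] by (simp add: mult.commute)
  also have "\<dots> = (\<Sum>y \<in> {..<n} - {x}. real (card {S \<in> link H x. S \<in> link H y}))"
    using sum_card_filter_swap[OF finite_link[OF assms(1)], of "{..<n} - {x}" "\<lambda>S y. S \<in> link H y"]
    by (simp flip: of_nat_sum)
  finally show ?thesis
    by (simp add: Int_def)
qed

lemma sum_card_link_inter_le:
  fixes \<gamma> :: real
  assumes "kgraph n k H" "x < n" "0 \<le> \<gamma>"
  defines "Y \<equiv> {y \<in> {..<n}. diamond_adj n k \<gamma> H x y}"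
  shows "(\<Sum>y \<in> {..<n} - {x}. real (card (link H x \<inter> link H y)))
           \<le> real (card Y) * card (link H x) + real n * (\<gamma> * (n choose (k - 1)))"
proof -
  let ?U = "{..<n} - {x}"
  have Y: "Y \<subseteq> ?U"
    by (auto simp: Y_def diamond_adj_def)
  have adjacent: "real (card (link H x \<inter> link H y)) \<le> card (link H x)" for y
    using finite_link[OF assms(1)] by (simp add: card_mono)
  have non_adjacent: "real (card (link H x \<inter> link H y)) \<le> \<gamma> * (n choose (k - 1))"
    if "y \<in> ?U - Y" for y
  proof -
    have "real (card (diamonds k H x y)) < \<gamma> * (n choose (k - 1))"
      using that assms(2) by (auto simp: Y_def diamond_adj_def)
    moreover have "card (link H x \<inter> link H y) \<le> card (diamonds k H x y)"
      using that by (intro card_link_inter_le_card_diamonds[OF assms(1)]) auto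
    ultimately show ?thesis
      by linarith
  qed
  have "card (?U - Y) \<le> card {..<n}"
    by (rule card_mono) auto
  then have "real (card (?U - Y)) * (\<gamma> * (n choose (k - 1))) \<le> n * (\<gamma> * (n choose (k - 1)))"
    using assms(3) by (intro mult_right_mono) auto
  moreover have "(\<Sum>y \<in> ?U. real (card (link H x \<inter> link H y)))
      = (\<Sum>y \<in> Y. real (card (link H x \<inter> link H y)))
        + (\<Sum>y \<in> ?U - Y. real (card (link H x \<inter> link H y)))"
    using Y by (simp add: sum.subset_diff)
  moreover have "(\<Sum>y \<in> Y. real (card (link H x \<inter> link H y))) \<le> real (card Y) * card (link H x)"
    using sum_bounded_above[of Y, OF adjacent] by simp
  moreover have "(\<Sum>y \<in> ?U - Y. real (card (link H x \<inter> link H y)))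
      \<le> card (?U - Y) * (\<gamma> * (n choose (k - 1)))"
    using sum_bounded_above[of "?U - Y", OF non_adjacent] by simp
  ultimately show ?thesis
    by linarith
qed

lemma diamond_degree_bound:
  fixes \<gamma> :: real
  assumes "kgraph n k H" "2 \<le> k" "k \<le> n" "x < n" "0 \<le> \<gamma>"
  defines "d \<equiv> real (min_codegree n k H)"
    and "Y \<equiv> real (card {y \<in> {..<n}. diamond_adj n k \<gamma> H x y})"
  shows "d * (d - 1 - Y) \<le> \<gamma> * (real n)\<^sup>2"
proof (cases "d - 1 - Y \<le> 0")
  case True
  then show ?thesis
    using assms(5) by (simp add: d_def mult_nonneg_nonpos order_trans[of _ 0])
next
  case False
  define L where "L = real (card (link H x))"
  define c where "c = real (n - 1 choose (k - 2))"
  have "c > 0"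
    using assms(2,3) by (simp add: c_def)
  have degree: "c * d \<le> real (k - 1) * L"
    using min_codegree_le_card_link[OF assms(1,2,4)] unfolding c_def d_def L_def
    by (metis of_nat_le_iff of_nat_mult)
  have excess: "(d - 1 - Y) * L \<le> n * (\<gamma> * (n choose (k - 1)))"
    using sum_card_link_inter_ge[OF assms(1) _ assms(4)] sum_card_link_inter_le[OF assms(1,4,5)] assms(2)
    unfolding d_def Y_def L_def by (simp add: algebra_simps)
  have "(k - 1) * (n choose (k - 1)) = n * (n - 1 choose (k - 2))"
    using times_binomial_minus1_eq[of "k - 1" n] assms(2) by (simp add: diff_diff_add numeral_2_eq_2)
  then have binomial: "real (k - 1) * (n choose (k - 1)) = n * c"
    unfolding c_def by (metis of_nat_mult)
  have "c * (d * (d - 1 - Y)) = (d - 1 - Y) * (c * d)"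
    by (simp add: algebra_simps)
  also have "\<dots> \<le> (d - 1 - Y) * (real (k - 1) * L)"
    using False degree by (intro mult_left_mono) auto
  also have "\<dots> = real (k - 1) * ((d - 1 - Y) * L)"
    by (simp add: algebra_simps)
  also have "\<dots> \<le> real (k - 1) * (n * (\<gamma> * (n choose (k - 1))))"
    using excess by (intro mult_left_mono) auto
  also have "\<dots> = c * (\<gamma> * (real n)\<^sup>2)"
    using binomial by (simp add: algebra_simps power2_eq_square)
  finally show ?thesis
    using \<open>c > 0\<close> by simp
qed

theorem lemma7p1:
  fixes k :: nat and \<gamma> :: real
  assumes "k \<ge> 2" and "0 < \<gamma>" and "\<gamma> \<le> 1/100"
  shows "\<exists>n0::nat. \<forall>n \<ge> n0. \<forall>H :: nat set set.
           kgraph n k H \<and> real (min_codegree n k H) \<ge> real n / 3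
           \<longrightarrow> real (diamond_min_degree n k \<gamma> H) \<ge> real n / 10"
proof (intro exI[of _ "k + 10"] allI impI)
  fix n :: nat and H :: "nat set set"
  assume n: "k + 10 \<le> n" and H: "kgraph n k H \<and> real (min_codegree n k H) \<ge> real n / 3"
  obtain x where "x < n" and x: "diamond_min_degree n k \<gamma> H = card {y \<in> {..<n}. diamond_adj n k \<gamma> H x y}"
    using diamond_min_degree_attained[of n k \<gamma> H] n by auto
  define d where "d = real (min_codegree n k H)"
  define Y where "Y = real (diamond_min_degree n k \<gamma> H)"
  have "d * (d - 1 - Y) \<le> \<gamma> * (real n)\<^sup>2"
    using diamond_degree_bound[of n k H x \<gamma>] H n \<open>x < n\<close> assms unfolding d_def Y_def x by simp
  also have "\<dots> \<le> (real n)\<^sup>2 / 100"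
    using mult_right_mono[OF assms(3), of "(real n)\<^sup>2"] by simp
  finally have bound: "d * (d - 1 - Y) \<le> (real n)\<^sup>2 / 100" .
  show "real n / 10 \<le> Y"
  proof (rule ccontr)
    assume "\<not> real n / 10 \<le> Y"
    then have "7 * n / 30 - 1 \<le> d - 1 - Y" and "n / 3 \<le> d" and "0 \<le> 7 * n / 30 - 1"
      using H n unfolding d_def by auto
    then have "n / 3 * (7 * n / 30 - 1) \<le> d * (d - 1 - Y)"
      by (intro mult_mono) auto
    moreover have "n / 3 * (7 * n / 30 - 1) = 7 / 90 * (real n)\<^sup>2 - n / 3"
      by (simp add: algebra_simps power2_eq_square)
    moreover have "10 * real n \<le> (real n)\<^sup>2" "10 \<le> real n"
      using n by (simp_all add: power2_eq_square)
    ultimately show False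
      using bound by linarith
  qed
qed

end
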